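(* There is no monoid over $\mathbb{C}^2$ — i.e. no set $M\subseteq\mathbb{C}^2$ of pairwise distinct vectors with an associative linear map $\mu:\mathbb{C}^2\otimes\mathbb{C}^2\to\mathbb{C}^2$ and a unit $e\in M$ — such that the multiplication $(a,b)\mapsto\mu(a\otimes b)$ on $M$ is isomorphic to the multiplication of the group $\hat Q$ of unit quaternions.
   Context: A monoid over $\mathbb{C}^2$ is a set $M\subseteq\mathbb{C}^2$ of pairwise distinct vectors, a linear map $\mu:\mathbb{C}^2\otimes\mathbb{C}^2\to\mathbb{C}^2$ with $\mu\circ(\mu\otimes\mathrm{id}) = \mu\circ(\mathrm{id}\otimes\mu)$, and $e\in M$ with $\mu(e\otimes m)=m=\mu(m\otimes e)$ for all $m\in M$. $\hat Q$ is the (non-commutative) group of quaternions $q_w+iq_x+jq_y+kq_z$ of unit length under quaternion multiplication ($i^2=j^2=k^2=ijk=-1$). *)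

theory Defs
  imports "HOL-Analysis.Analysis"
begin

text \<open>Quaternions q_w + i q_x + j q_y + k q_z, with Hamilton multiplication
  (i^2 = j^2 = k^2 = ijk = -1).\<close>
datatype quat = Quat (qw: real) (qx: real) (qy: real) (qz: real)

definition qmult :: "quat \<Rightarrow> quat \<Rightarrow> quat" where
  "qmult p q = Quat
     (qw p * qw q - qx p * qx q - qy p * qy q - qz p * qz q)
     (qw p * qx q + qx p * qw q + qy p * qz q - qz p * qy q)
     (qw p * qy q - qx p * qz q + qy p * qw q + qz p * qx q)
     (qw p * qz q + qx p * qy q - qy p * qx q + qz p * qw q)"

definition unit_quats :: "quat set" where
  "unit_quats = {q. sqrt ((qw q)\<^sup>2 + (qx q)\<^sup>2 + (qy q)\<^sup>2 + (qz q)\<^sup>2) = 1}"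

text \<open>A linear map mu : C^2 (tensor) C^2 -> C^2 is given by its structure constants
  c i j k = k-th coordinate of mu(b_i (tensor) b_j); applied to a pure tensor a (tensor) b.\<close>
definition tensor_mult :: "(2 \<Rightarrow> 2 \<Rightarrow> 2 \<Rightarrow> complex) \<Rightarrow> complex^2 \<Rightarrow> complex^2 \<Rightarrow> complex^2" where
  "tensor_mult c a b = (\<chi> k. \<Sum>i\<in>UNIV. \<Sum>j\<in>UNIV. c i j k * a$i * b$j)"

text \<open>Associativity mu o (mu (tensor) id) = mu o (id (tensor) mu), checked on pure tensors
  (which span the triple tensor product).\<close>
definition assoc_tensor :: "(2 \<Rightarrow> 2 \<Rightarrow> 2 \<Rightarrow> complex) \<Rightarrow> bool" where
  "assoc_tensor c \<longleftrightarrow> (\<forall>a b d. tensor_mult c (tensor_mult c a b) d = tensor_mult c a (tensor_mult c b d))"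

definition monoid_over_C2 :: "(complex^2) set \<Rightarrow> (2 \<Rightarrow> 2 \<Rightarrow> 2 \<Rightarrow> complex) \<Rightarrow> complex^2 \<Rightarrow> bool" where
  "monoid_over_C2 M c e \<longleftrightarrow> assoc_tensor c \<and> e \<in> M \<and>
     (\<forall>m\<in>M. tensor_mult c e m = m \<and> tensor_mult c m e = m)"

end

theory Submission
  imports Defs
begin

text \<open>A bilinear multiplication on a two-dimensional space with a two-sided unit e is commutative: if x is a multiple of e it commutes with everything, and
  otherwise e and x form a basis, so every y is a combination of e and x and commutes with x.
  The unit quaternions are not commutative (i j = k but j i = -k), and an injective
  multiplicative map would have to separate these two products.\<close>

lemma tensor_mult_nth:
  "tensor_mult c a b $ k =
     c 1 1 k * a$1 * b$1 + c 1 2 k * a$1 * b$2 + c 2 1 k * a$2 * b$1 + c 2 2 k * a$2 * b$2"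
  unfolding tensor_mult_def by (simp add: sum_2)

lemma tensor_mult_left_linear:
  "tensor_mult c (s *s x + t *s y) z = s *s tensor_mult c x z + t *s tensor_mult c y z"
  unfolding vec_eq_iff by (simp add: tensor_mult_nth algebra_simps)

lemma tensor_mult_right_linear:
  "tensor_mult c z (s *s x + t *s y) = s *s tensor_mult c z x + t *s tensor_mult c z y"
  unfolding vec_eq_iff by (simp add: tensor_mult_nth algebra_simps)

lemma tensor_mult_scale_left: "tensor_mult c (s *s x) z = s *s tensor_mult c x z"
  unfolding vec_eq_iff by (simp add: tensor_mult_nth algebra_simps)

lemma tensor_mult_scale_right: "tensor_mult c z (s *s x) = s *s tensor_mult c z x"
  unfolding vec_eq_iff by (simp add: tensor_mult_nth algebra_simps)

lemma tensor_mult_zero_left [simp]: "tensor_mult c 0 z = 0"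
  unfolding vec_eq_iff by (simp add: tensor_mult_nth)

lemma vec2_parallel_or_spanning:
  fixes e x :: "'a::field ^ 2"
  assumes "e \<noteq> 0"
  obtains a where "x = a *s e"
  | "\<And>y. \<exists>\<alpha> \<beta>. y = \<alpha> *s e + \<beta> *s x"
proof (cases "e$1 * x$2 - e$2 * x$1 = 0")
  case det: False
  define D where "D = e$1 * x$2 - e$2 * x$1"
  \<comment> \<open>Cramer's rule\<close>
  have "y = ((y$1 * x$2 - y$2 * x$1) / D) *s e + ((e$1 * y$2 - e$2 * y$1) / D) *s x" for y
    using det unfolding vec_eq_iff forall_2 D_def
    by (simp add: divide_simps, intro conjI; algebra)
  then show thesis using that(2) by blast
next
  case det: True
  show thesis
  proof (cases "e$1 = 0")
    case False
    then have "x = (x$1 / e$1) *s e"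
      using det unfolding vec_eq_iff forall_2 by (simp add: field_simps)
    then show thesis by (rule that(1))
  next
    case True
    then have "e$2 \<noteq> 0" using assms unfolding vec_eq_iff forall_2 by simp
    then have "x = (x$2 / e$2) *s e"
      using det True unfolding vec_eq_iff forall_2 by (simp add: field_simps)
    then show thesis by (rule that(1))
  qed
qed

lemma tensor_mult_commute_on_unital:
  assumes ex: "tensor_mult c e x = x" and xe: "tensor_mult c x e = x"
    and ey: "tensor_mult c e y = y" and ye: "tensor_mult c y e = y"
  shows "tensor_mult c x y = tensor_mult c y x"
proof (cases "e = 0")
  case True
  then have "x = 0" "y = 0" using ex ey by simp_all
  then show ?thesis by simp
next
  case False
  then show ?thesis
  proof (rule vec2_parallel_or_spanning[of e x])
    fix a assume x: "x = a *s e"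
    show ?thesis
      by (subst (1 2) x, simp only: tensor_mult_scale_left tensor_mult_scale_right ey ye)
  next
    assume "\<And>y. \<exists>\<alpha> \<beta>. y = \<alpha> *s e + \<beta> *s x"
    then obtain \<alpha> \<beta> where y: "y = \<alpha> *s e + \<beta> *s x" by blast
    show ?thesis
      by (subst (1 2) y, simp only: tensor_mult_left_linear tensor_mult_right_linear ex xe)
  qed
qed

lemma qmult_norm_squared:
  "(qw (qmult p q))\<^sup>2 + (qx (qmult p q))\<^sup>2 + (qy (qmult p q))\<^sup>2 + (qz (qmult p q))\<^sup>2 =
     ((qw p)\<^sup>2 + (qx p)\<^sup>2 + (qy p)\<^sup>2 + (qz p)\<^sup>2) * ((qw q)\<^sup>2 + (qx q)\<^sup>2 + (qy q)\<^sup>2 + (qz q)\<^sup>2)"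
  by (simp add: qmult_def power2_eq_square algebra_simps)

lemma qmult_unit_quats: "p \<in> unit_quats \<Longrightarrow> q \<in> unit_quats \<Longrightarrow> qmult p q \<in> unit_quats"
  by (simp add: unit_quats_def qmult_norm_squared real_sqrt_mult)

lemma unit_quats_not_commutative:
  "\<exists>p\<in>unit_quats. \<exists>q\<in>unit_quats. qmult p q \<noteq> qmult q p"
proof (intro bexI)
  show "qmult (Quat 0 1 0 0) (Quat 0 0 1 0) \<noteq> qmult (Quat 0 0 1 0) (Quat 0 1 0 0)"
    by (simp add: qmult_def)
qed (simp_all add: unit_quats_def)

theorem corollary4p3:
  shows "\<not> (\<exists>M c e \<phi>. monoid_over_C2 M c e \<and> bij_betw \<phi> unit_quats M \<and>
            (\<forall>p\<in>unit_quats. \<forall>q\<in>unit_quats. \<phi> (qmult p q) = tensor_mult c (\<phi> p) (\<phi> q)))"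
proof
  assume "\<exists>M c e \<phi>. monoid_over_C2 M c e \<and> bij_betw \<phi> unit_quats M \<and>
            (\<forall>p\<in>unit_quats. \<forall>q\<in>unit_quats. \<phi> (qmult p q) = tensor_mult c (\<phi> p) (\<phi> q))"
  then obtain M c e \<phi> where monoid: "monoid_over_C2 M c e" and bij: "bij_betw \<phi> unit_quats M"
    and hom: "\<forall>p\<in>unit_quats. \<forall>q\<in>unit_quats. \<phi> (qmult p q) = tensor_mult c (\<phi> p) (\<phi> q)"
    by blast
  obtain p q where pq: "p \<in> unit_quats" "q \<in> unit_quats" and "qmult p q \<noteq> qmult q p"
    using unit_quats_not_commutative by blast
  then have "\<phi> (qmult p q) \<noteq> \<phi> (qmult q p)"
    using bij qmult_unit_quats unfolding bij_betw_def inj_on_def by blast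
  moreover have "\<phi> p \<in> M" "\<phi> q \<in> M" using bij pq bij_betwE by blast+
  then have "tensor_mult c (\<phi> p) (\<phi> q) = tensor_mult c (\<phi> q) (\<phi> p)"
    using monoid unfolding monoid_over_C2_def by (blast intro: tensor_mult_commute_on_unital)
  ultimately show False using hom pq by simp
qed

end
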